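(* Let $m,n$ be integers with $m\equiv n\equiv 0\pmod 4$ and $m,n>4$. Then the direct product $C_m\times C_n$ is a distance magic graph, but it is not a balanced distance magic graph.
   Context: All graphs are finite and simple; $C_n$ denotes the cycle on $n$ vertices. For a graph $G$ and vertex $x$, $N(x)$ is the (open) neighborhood of $x$. A distance magic labeling of a graph $G$ of order $N$ is a bijection $\ell\colon V(G)\to\{1,\dots,N\}$ for which there is a constant $k$ such that $\sum_{y\in N(x)}\ell(y)=k$ for every $x\in V(G)$; $G$ is distance magic if it admits such a labeling. A balanced distance magic labeling of a graph with an even number $N$ of vertices is a distance magic labeling $\ell$ such that for every vertex $w$: whenever $u\in N(w)$ has $\ell(u)=i$, there is $v\in N(w)$ with $\ell(v)=N+1-i$; a graph is balanced distance magic if it has an even number of vertices and admits such a labeling. The direct product $G\times H$ has vertex set $V(G)\times V(H)$, with $(g,h)$ adjacent to $(g',h')$ iff $gg'\in E(G)$ and $hh'\in E(H)$. *)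

theory Defs
  imports Main
begin

text \<open>A finite simple graph is given by a vertex set V and a symmetric
irreflexive adjacency relation E (only its restriction to V matters).\<close>

definition nbhd :: "'a set \<Rightarrow> ('a \<Rightarrow> 'a \<Rightarrow> bool) \<Rightarrow> 'a \<Rightarrow> 'a set" where
  "nbhd V E x = {y \<in> V. E x y}"

definition distance_magic_labeling ::
  "'a set \<Rightarrow> ('a \<Rightarrow> 'a \<Rightarrow> bool) \<Rightarrow> ('a \<Rightarrow> nat) \<Rightarrow> bool" where
  "distance_magic_labeling V E l \<longleftrightarrow>
     bij_betw l V {1..card V} \<and>
     (\<exists>k. \<forall>x\<in>V. (\<Sum>y\<in>nbhd V E x. l y) = k)"

definition distance_magic :: "'a set \<Rightarrow> ('a \<Rightarrow> 'a \<Rightarrow> bool) \<Rightarrow> bool" where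
  "distance_magic V E \<longleftrightarrow> (\<exists>l. distance_magic_labeling V E l)"

definition balanced_distance_magic_labeling ::
  "'a set \<Rightarrow> ('a \<Rightarrow> 'a \<Rightarrow> bool) \<Rightarrow> ('a \<Rightarrow> nat) \<Rightarrow> bool" where
  "balanced_distance_magic_labeling V E l \<longleftrightarrow>
     distance_magic_labeling V E l \<and>
     (\<forall>w\<in>V. \<forall>u\<in>nbhd V E w. \<exists>v\<in>nbhd V E w. l v = card V + 1 - l u)"

definition balanced_distance_magic :: "'a set \<Rightarrow> ('a \<Rightarrow> 'a \<Rightarrow> bool) \<Rightarrow> bool" where
  "balanced_distance_magic V E \<longleftrightarrow>
     even (card V) \<and> (\<exists>l. balanced_distance_magic_labeling V E l)"

definition cycle_verts :: "nat \<Rightarrow> nat set" where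
  "cycle_verts n = {0..<n}"

definition cycle_adj :: "nat \<Rightarrow> nat \<Rightarrow> nat \<Rightarrow> bool" where
  "cycle_adj n i j \<longleftrightarrow> i < n \<and> j < n \<and> (j = (i + 1) mod n \<or> i = (j + 1) mod n)"

definition direct_prod_adj ::
  "('a \<Rightarrow> 'a \<Rightarrow> bool) \<Rightarrow> ('b \<Rightarrow> 'b \<Rightarrow> bool) \<Rightarrow> 'a \<times> 'b \<Rightarrow> 'a \<times> 'b \<Rightarrow> bool" where
  "direct_prod_adj E F x y \<longleftrightarrow> E (fst x) (fst y) \<and> F (snd x) (snd y)"

end

theory Submission
  imports Defs
begin

text \<open>
  Write \<open>\<sigma>(x) = \<plusminus>1\<close> according as \<open>x mod 4 \<in> {0,1}\<close> or \<open>{2,3}\<close>, and let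
  \<open>h(x) = 2 (2 (x div 4) + x mod 2) + 1\<close> (below \<open>sign4\<close> and \<open>2 rank4 + 1\<close>); for \<open>x < m\<close> this is odd and at most \<open>m - 1\<close>, and
  \<open>x\<close> is determined by \<open>(\<sigma>(x), h(x))\<close>. Label \<open>(a, b)\<close> by
  \<open>(mn + 1 + n \<sigma>(b) h(a) + \<sigma>(a) h(b)) / 2\<close>. The perturbation \<open>n X + Y\<close> with \<open>X\<close> odd and
  \<open>|Y| < n\<close> is a mixed-radix expansion, so the labels are distinct and fill \<open>{1..mn}\<close>.
  The two neighbours \<open>i \<plusminus> 1\<close> of a vertex of a cycle of length divisible by 4 differ by 2 modulo 4,
  so they have opposite \<open>\<sigma>\<close>; hence the perturbations cancel over each neighbourhood
  \<open>{a\<plusminus>1} \<times> {b\<plusminus>1}\<close>, whose label sum is always \<open>2 (mn + 1)\<close>.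

  For \<open>m, n > 4\<close>, the vertices \<open>(0,0)\<close> and \<open>(2,2)\<close> have \<open>(1,1)\<close> as their only common neighbour.
  In a balanced labeling, the partner of \<open>(1,1)\<close> in both neighbourhoods is the same vertex,
  hence \<open>(1,1)\<close> itself, forcing \<open>2 l(1,1) = mn + 1\<close>, which is impossible as \<open>mn\<close> is even.
\<close>

lemma nbhd_direct_prod:
  "nbhd (V \<times> W) (direct_prod_adj E F) (x, y) = nbhd V E x \<times> nbhd W F y"
  by (auto simp: nbhd_def direct_prod_adj_def)

lemma nbhd_cycle:
  assumes "i < n"
  shows "nbhd (cycle_verts n) (cycle_adj n) i = {(i + 1) mod n, (i + n - 1) mod n}"
proof -
  have pred: "(j + 1) mod n = i \<longleftrightarrow> j = (i + n - 1) mod n" if "j < n" for j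
    using that assms by (cases "i = 0") (auto simp: mod_if)
  have "0 < n" using assms by simp
  then have wrap: "((i + n - 1) mod n + 1) mod n = i" using pred by simp
  show ?thesis
    using \<open>0 < n\<close> assms wrap[symmetric] pred unfolding nbhd_def cycle_verts_def cycle_adj_def
    by (auto simp del: One_nat_def)
qed

lemma cycle_common_nbhd:
  assumes "4 < n"
  shows "nbhd (cycle_verts n) (cycle_adj n) 0 \<inter> nbhd (cycle_verts n) (cycle_adj n) 2 = {1}"
proof -
  have "(0 + n - 1) mod n = n - 1" "(2 + n - 1) mod n = 1" "(0 + 1) mod n = 1" "(2 + 1) mod n = 3"
    using assms by (simp_all add: mod_if)
  with assms show ?thesis by (simp add: nbhd_cycle)
qed

lemma not_balanced_distance_magic_if_unique_common_nbhd:
  assumes "w \<in> V" "w' \<in> V" "nbhd V E w \<inter> nbhd V E w' = {u}"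
  shows "\<not> balanced_distance_magic V E"
proof
  assume "balanced_distance_magic V E"
  then obtain l where even: "even (card V)" and bij: "bij_betw l V {1..card V}"
    and partner: "\<And>w u. w \<in> V \<Longrightarrow> u \<in> nbhd V E w \<Longrightarrow> \<exists>v\<in>nbhd V E w. l v = card V + 1 - l u"
    unfolding balanced_distance_magic_def balanced_distance_magic_labeling_def
      distance_magic_labeling_def by blast
  have u: "u \<in> nbhd V E w" "u \<in> nbhd V E w'" using assms(3) by auto
  obtain v where v: "v \<in> nbhd V E w" "l v = card V + 1 - l u" using partner[OF assms(1) u(1)] by blast
  obtain v' where v': "v' \<in> nbhd V E w'" "l v' = card V + 1 - l u" using partner[OF assms(2) u(2)] by blast
  have "v = v'"
    using bij v v' unfolding bij_betw_def inj_on_def nbhd_def by auto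
  with v v' assms(3) have "v = u" by blast
  moreover have "l u \<in> {1..card V}" using bij u(1) unfolding bij_betw_def nbhd_def by auto
  ultimately have "2 * l u = card V + 1" using v(2) by auto
  with even show False by presburger
qed

definition sign4 :: "nat \<Rightarrow> int" where
  "sign4 x = (if x mod 4 < 2 then 1 else -1)"

definition rank4 :: "nat \<Rightarrow> nat" where
  "rank4 x = 2 * (x div 4) + x mod 2"

lemma sign4_cases: "sign4 x = 1 \<or> sign4 x = -1"
  by (simp add: sign4_def)

lemma sign4_mod: "4 dvd n \<Longrightarrow> sign4 (x mod n) = sign4 x"
  by (simp add: sign4_def mod_mod_cancel)

lemma sign4_add_2: "sign4 (x + 2) = - sign4 x"
proof -
  have "(x + 2) mod 4 < 2 \<longleftrightarrow> \<not> x mod 4 < 2" by presburger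
  then show ?thesis by (simp add: sign4_def)
qed

lemma sign4_opposite_on_cycle_nbhd:
  assumes "4 dvd n" "0 < n"
  shows "sign4 ((i + n - 1) mod n) = - sign4 ((i + 1) mod n)"
proof -
  have "(i + n - 1) mod 4 = (i + 1 + 2) mod 4"
  proof -
    obtain k where "n = 4 * k" using assms(1) by blast
    with assms(2) have "i + n - 1 = i + 1 + 2 + 4 * (k - 1)" by simp
    then show ?thesis by presburger
  qed
  then have "sign4 ((i + n - 1) mod n) = sign4 (i + 1 + 2)"
    using assms(1) by (simp only: sign4_mod) (simp only: sign4_def)
  also have "\<dots> = - sign4 ((i + 1) mod n)"
    using assms(1) by (simp only: sign4_add_2 sign4_mod)
  finally show ?thesis .
qed

lemma sign4_rank4_inj:
  assumes "sign4 x = sign4 y" "rank4 x = rank4 y"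
  shows "x = y"
proof -
  have mod4: "k mod 4 = (if k mod 4 < 2 then 0 else 2) + k mod (2::nat)" for k
  proof -
    have "k mod 4 < 4" by simp
    then consider "k mod 4 = 0" | "k mod 4 = 1" | "k mod 4 = 2" | "k mod 4 = 3" by linarith
    then show ?thesis using mod_mod_cancel[of 2 4 k] by cases auto
  qed
  have "x mod 2 = y mod 2"
    using arg_cong[OF assms(2), of "\<lambda>k. k mod 2"] by (simp add: rank4_def)
  with assms(2) have "x div 4 = y div 4" by (simp add: rank4_def)
  have "(x mod 4 < 2) = (y mod 4 < 2)"
    using assms(1) by (simp add: sign4_def split: if_splits)
  with \<open>x mod 2 = y mod 2\<close> have "x mod 4 = y mod 4" using mod4[of x] mod4[of y] by simp
  with \<open>x div 4 = y div 4\<close> show ?thesis by (metis div_mult_mod_eq)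
qed

lemma rank4_less:
  assumes "4 dvd n" "x < n"
  shows "2 * rank4 x + 1 < n"
proof -
  obtain k where "n = 4 * k" using assms(1) by blast
  with assms(2) have "x div 4 < k" by auto
  then show ?thesis using \<open>n = 4 * k\<close> by (simp add: rank4_def)
qed

lemma mult_add_eq_cancel_int:
  fixes n X X' Y Y' :: int
  assumes "even (X - X')" "\<bar>Y\<bar> < n" "\<bar>Y'\<bar> < n" "n * X + Y = n * X' + Y'"
  shows "X = X' \<and> Y = Y'"
proof -
  have "X = X'"
  proof (rule ccontr)
    assume "X \<noteq> X'"
    with assms(1) have "2 \<le> \<bar>X - X'\<bar>" by presburger
    then have "2 * n \<le> n * \<bar>X - X'\<bar>" using assms(2) by (simp add: mult_left_mono mult.commute)
    also have "\<dots> = \<bar>n * (X - X')\<bar>" using assms(2) by (simp add: abs_mult)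
    also have "\<dots> = \<bar>Y' - Y\<bar>" using assms(4) by (simp add: algebra_simps)
    finally show False using assms(2,3) by linarith
  qed
  with assms(4) show ?thesis by simp
qed

definition cycle_prod_offset :: "nat \<Rightarrow> nat \<times> nat \<Rightarrow> int" where
  "cycle_prod_offset n p = int n * sign4 (snd p) * (2 * int (rank4 (fst p)) + 1)
                + sign4 (fst p) * (2 * int (rank4 (snd p)) + 1)"

lemma abs_sign4 [simp]: "\<bar>sign4 x\<bar> = 1"
  by (simp add: sign4_def)

lemma odd_sign4_mult: "odd (sign4 x * (2 * k + 1))"
  by (simp add: sign4_def)

lemma sign4_mult_odd_rank4_inj:
  assumes "sign4 x * (2 * int (rank4 y) + 1) = sign4 x' * (2 * int (rank4 y') + 1)"
  shows "sign4 x = sign4 x' \<and> rank4 y = rank4 y'"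
proof -
  have "2 * int (rank4 y) + 1 = 2 * int (rank4 y') + 1"
    using arg_cong[OF assms, of abs] by (simp add: abs_mult)
  then have "rank4 y = rank4 y'" by simp
  moreover from this assms have "sign4 x = sign4 x'" by simp
  ultimately show ?thesis by simp
qed

lemma cycle_prod_offset_inj:
  assumes "4 dvd n" "b < n" "b' < n" "cycle_prod_offset n (a, b) = cycle_prod_offset n (a', b')"
  shows "(a, b) = (a', b')"
proof -
  define X where "X = sign4 b * (2 * int (rank4 a) + 1)"
  define X' where "X' = sign4 b' * (2 * int (rank4 a') + 1)"
  define Y where "Y = sign4 a * (2 * int (rank4 b) + 1)"
  define Y' where "Y' = sign4 a' * (2 * int (rank4 b') + 1)"
  have "odd X" "odd X'" unfolding X_def X'_def by (rule odd_sign4_mult)+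
  then have "even (X - X')" by simp
  moreover have "\<bar>Y\<bar> < int n" "\<bar>Y'\<bar> < int n"
    unfolding Y_def Y'_def using rank4_less[OF assms(1) assms(2)] rank4_less[OF assms(1) assms(3)]
    by (simp_all add: abs_mult)
  moreover have "int n * X + Y = int n * X' + Y'"
    using assms(4) unfolding X_def X'_def Y_def Y'_def cycle_prod_offset_def
    by (simp add: algebra_simps)
  ultimately have "X = X' \<and> Y = Y'" by (rule mult_add_eq_cancel_int)
  then show ?thesis
    unfolding X_def X'_def Y_def Y'_def
    by (auto dest!: sign4_mult_odd_rank4_inj intro: sign4_rank4_inj)
qed

lemma cycle_prod_offset_odd: "even n \<Longrightarrow> odd (cycle_prod_offset n p)"
  using sign4_cases[of "fst p"] by (auto simp: cycle_prod_offset_def)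

lemma cycle_prod_offset_abs_less:
  assumes "4 dvd m" "4 dvd n" "a < m" "b < n"
  shows "\<bar>cycle_prod_offset n (a, b)\<bar> < int (m * n)"
proof -
  have "\<bar>cycle_prod_offset n (a, b)\<bar> \<le> int n * (2 * int (rank4 a) + 1) + (2 * int (rank4 b) + 1)"
    unfolding cycle_prod_offset_def by (rule order.trans[OF abs_triangle_ineq]) (simp add: abs_mult)
  also have "\<dots> \<le> int n * (int m - 1) + (int n - 1)"
    using rank4_less[OF assms(1,3)] rank4_less[OF assms(2,4)]
    by (intro add_mono mult_left_mono) auto
  finally show ?thesis by (simp add: algebra_simps)
qed

lemma cycle_prod_offset_sum_cancel:
  assumes "sign4 a' = - sign4 a" "sign4 b' = - sign4 b"
  shows "cycle_prod_offset n (a, b) + cycle_prod_offset n (a, b')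
           + cycle_prod_offset n (a', b) + cycle_prod_offset n (a', b') = 0"
  using assms by (simp add: cycle_prod_offset_def algebra_simps)

definition cycle_prod_label :: "nat \<Rightarrow> nat \<Rightarrow> nat \<times> nat \<Rightarrow> nat" where
  "cycle_prod_label m n p = nat ((int (m * n) + 1 + cycle_prod_offset n p) div 2)"

lemma double_cycle_prod_label:
  assumes "4 dvd m" "4 dvd n" "a < m" "b < n"
  shows "2 * int (cycle_prod_label m n (a, b)) = int (m * n) + 1 + cycle_prod_offset n (a, b)"
proof -
  have "even n" using assms(2) by (rule dvd_trans[rotated]) simp
  then have "even (int (m * n) + 1 + cycle_prod_offset n (a, b))"
    using cycle_prod_offset_odd by simp
  moreover have "0 \<le> int (m * n) + 1 + cycle_prod_offset n (a, b)"
    using cycle_prod_offset_abs_less[OF assms] by linarith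
  ultimately show ?thesis unfolding cycle_prod_label_def by (auto elim!: evenE)
qed

lemma cycle_prod_label_bij:
  assumes "4 dvd m" "4 dvd n"
  shows "bij_betw (cycle_prod_label m n) (cycle_verts m \<times> cycle_verts n) {1..m * n}"
proof -
  let ?l = "cycle_prod_label m n" and ?V = "cycle_verts m \<times> cycle_verts n"
  have inj: "inj_on ?l ?V"
  proof (rule inj_onI)
    fix p q assume "p \<in> ?V" "q \<in> ?V" "?l p = ?l q"
    moreover obtain a b a' b' where "p = (a, b)" "q = (a', b')" by fastforce
    ultimately show "p = q"
      using double_cycle_prod_label[OF assms, of a b] double_cycle_prod_label[OF assms, of a' b']
        cycle_prod_offset_inj[OF assms(2), of b b' a a']
      by (auto simp: cycle_verts_def)
  qed
  have "?l ` ?V \<subseteq> {1..m * n}"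
  proof (rule image_subsetI)
    fix p assume "p \<in> ?V"
    then obtain a b where p: "p = (a, b)" "a < m" "b < n" by (auto simp: cycle_verts_def)
    then have "2 * int (?l p) = int (m * n) + 1 + cycle_prod_offset n (a, b)"
      "\<bar>cycle_prod_offset n (a, b)\<bar> < int (m * n)"
      using double_cycle_prod_label[OF assms] cycle_prod_offset_abs_less[OF assms] by auto
    then have "1 \<le> int (?l p)" "int (?l p) \<le> int (m * n)" by linarith+
    then show "?l p \<in> {1..m * n}" by (auto simp del: of_nat_mult)
  qed
  moreover have "card (?l ` ?V) = card {1..m * n}"
    using card_image[OF inj] by (simp add: cycle_verts_def card_cartesian_product)
  ultimately have "?l ` ?V = {1..m * n}" by (intro card_subset_eq) auto
  with inj show ?thesis by (simp add: bij_betw_def)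
qed

lemma cycle_prod_label_nbhd_sum:
  assumes "4 dvd m" "4 dvd n" "i < m" "j < n"
  shows "(\<Sum>p \<in> nbhd (cycle_verts m \<times> cycle_verts n) (direct_prod_adj (cycle_adj m) (cycle_adj n)) (i, j).
            cycle_prod_label m n p) = 2 * (m * n + 1)"
proof -
  define a where "a = (i + 1) mod m"
  define a' where "a' = (i + m - 1) mod m"
  define b where "b = (j + 1) mod n"
  define b' where "b' = (j + n - 1) mod n"
  have signs: "sign4 a' = - sign4 a" "sign4 b' = - sign4 b"
    unfolding a_def a'_def b_def b'_def
    by (rule sign4_opposite_on_cycle_nbhd; use assms in simp)+
  then have "a \<noteq> a'" "b \<noteq> b'" using sign4_cases[of a] sign4_cases[of b] by auto
  have bounds: "a < m" "a' < m" "b < n" "b' < n" unfolding a_def a'_def b_def b'_def using assms by auto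
  have "nbhd (cycle_verts m \<times> cycle_verts n) (direct_prod_adj (cycle_adj m) (cycle_adj n)) (i, j)
      = {a, a'} \<times> {b, b'}"
    unfolding a_def a'_def b_def b'_def using assms by (simp add: nbhd_direct_prod nbhd_cycle)
  moreover have "(\<Sum>p \<in> {a, a'} \<times> {b, b'}. cycle_prod_label m n p) = 2 * (m * n + 1)"
  proof -
    have "2 * int (\<Sum>p \<in> {a, a'} \<times> {b, b'}. cycle_prod_label m n p)
        = (\<Sum>x \<in> {a, a'}. \<Sum>y \<in> {b, b'}. 2 * int (cycle_prod_label m n (x, y)))"
      by (simp add: sum.cartesian_product sum_distrib_left)
    also have "\<dots> = 4 * (int (m * n) + 1)
        + (cycle_prod_offset n (a, b) + cycle_prod_offset n (a, b')
           + cycle_prod_offset n (a', b) + cycle_prod_offset n (a', b'))"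
      using \<open>a \<noteq> a'\<close> \<open>b \<noteq> b'\<close> bounds by (simp add: double_cycle_prod_label[OF assms(1,2)])
    finally have "2 * int (\<Sum>p \<in> {a, a'} \<times> {b, b'}. cycle_prod_label m n p)
        = 2 * int (2 * (m * n + 1))"
      using cycle_prod_offset_sum_cancel[OF signs] by simp
    then show ?thesis by (simp only: mult_cancel_left of_nat_eq_iff) simp
  qed
  ultimately show ?thesis by simp
qed

lemma distance_magic_labeling_cycle_prod:
  assumes "4 dvd m" "4 dvd n"
  shows "distance_magic_labeling (cycle_verts m \<times> cycle_verts n)
           (direct_prod_adj (cycle_adj m) (cycle_adj n)) (cycle_prod_label m n)"
  unfolding distance_magic_labeling_def
proof (intro conjI exI ballI)
  show "bij_betw (cycle_prod_label m n) (cycle_verts m \<times> cycle_verts n)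
          {1..card (cycle_verts m \<times> cycle_verts n)}"
    using cycle_prod_label_bij[OF assms] by (simp add: cycle_verts_def card_cartesian_product)
next
  fix x assume "x \<in> cycle_verts m \<times> cycle_verts n"
  then show "(\<Sum>y \<in> nbhd (cycle_verts m \<times> cycle_verts n) (direct_prod_adj (cycle_adj m) (cycle_adj n)) x.
              cycle_prod_label m n y) = 2 * (m * n + 1)"
    using cycle_prod_label_nbhd_sum[OF assms] by (auto simp: cycle_verts_def)
qed

lemma cycle_prod_common_nbhd:
  assumes "4 < m" "4 < n"
  shows "nbhd (cycle_verts m \<times> cycle_verts n) (direct_prod_adj (cycle_adj m) (cycle_adj n)) (0, 0)
       \<inter> nbhd (cycle_verts m \<times> cycle_verts n) (direct_prod_adj (cycle_adj m) (cycle_adj n)) (2, 2)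
       = {(1, 1)}"
  using cycle_common_nbhd[OF assms(1)] cycle_common_nbhd[OF assms(2)]
  by (simp add: nbhd_direct_prod Times_Int_Times)

theorem mainTheorem10:
  fixes m n :: nat
  assumes "4 dvd m" and "4 dvd n" and "m > 4" and "n > 4"
  shows "distance_magic (cycle_verts m \<times> cycle_verts n)
           (direct_prod_adj (cycle_adj m) (cycle_adj n))
       \<and> \<not> balanced_distance_magic (cycle_verts m \<times> cycle_verts n)
           (direct_prod_adj (cycle_adj m) (cycle_adj n))"
proof
  show "distance_magic (cycle_verts m \<times> cycle_verts n) (direct_prod_adj (cycle_adj m) (cycle_adj n))"
    unfolding distance_magic_def using distance_magic_labeling_cycle_prod[OF assms(1,2)] by blast
  have "(0, 0) \<in> cycle_verts m \<times> cycle_verts n" "(2, 2) \<in> cycle_verts m \<times> cycle_verts n"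
    using assms(3,4) by (auto simp: cycle_verts_def)
  then show "\<not> balanced_distance_magic (cycle_verts m \<times> cycle_verts n)
      (direct_prod_adj (cycle_adj m) (cycle_adj n))"
    using cycle_prod_common_nbhd[OF assms(3,4)] by (rule not_balanced_distance_magic_if_unique_common_nbhd)
qed

end
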